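(* Let $p$ be an odd prime. If $p\equiv 3\pmod 4$, then $g\big(\tfrac{p^2-1}{4},p^2\big)=p-1$. If $p\equiv 1\pmod 4$, then the Waring number $g\big(\tfrac{p^2-1}{4},p^2\big)$ does not exist.
   Context: For a prime power $q$ and a positive integer $k$, the Waring number $g(k,q)$ is the smallest $s$ (if it exists) such that every element of $\mathbb{F}_q$ is a sum of $s$ $k$-th powers of elements of $\mathbb{F}_q$. *)

theory Defs
  imports "HOL-Computational_Algebra.Primes"
begin

definition waring_prop :: "'a::{field,finite} itself \<Rightarrow> nat \<Rightarrow> nat \<Rightarrow> bool" where
  "waring_prop T k s \<longleftrightarrow> (\<forall>x::'a. \<exists>f::nat \<Rightarrow> 'a. x = (\<Sum>i<s. f i ^ k))"

definition waring_number :: "'a::{field,finite} itself \<Rightarrow> nat \<Rightarrow> nat option" where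
  "waring_number T k =
     (if \<exists>s. waring_prop T k s then Some (LEAST s. waring_prop T k s) else None)"

end

theory Submission
  imports Defs "HOL-Number_Theory.Residues" "HOL-Computational_Algebra.Polynomial"
begin

text \<open>
  Let \<open>q = p\<^sup>2\<close> and \<open>k = (q - 1) / 4\<close>. The nonzero \<open>k\<close>-th powers are the fourth roots
  of unity \<open>\<plusminus>1, \<plusminus>i\<close> with \<open>i\<^sup>2 = -1\<close>. If \<open>p \<equiv> 1 (mod 4)\<close>, Frobenius fixes \<open>i\<close>, so every
  sum of \<open>k\<close>-th powers lies in the prime field, a proper subfield. If \<open>p \<equiv> 3 (mod 4)\<close>,
  Frobenius sends \<open>i\<close> to \<open>-i\<close>, so every element is uniquely \<open>a + b i\<close> with \<open>a, b\<close> in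
  the prime field. A sum of \<open>s\<close> such powers is \<open>a + b i\<close> with integers \<open>|a| + |b| \<le> s\<close>;
  choosing representatives in \<open>[-(p-1)/2, (p-1)/2]\<close> shows \<open>p - 1\<close> summands suffice,
  and \<open>(p - 1)/2 \<cdot> (1 + i)\<close> needs all of them.
\<close>

lemma of_nat_power_CHAR:
  assumes "prime CHAR('a::comm_semiring_1)"
  shows "(of_nat n :: 'a) ^ CHAR('a) = of_nat n"
proof -
  have "(of_nat n :: 'a) ^ CHAR('a) = (\<Sum>_<n. 1) ^ CHAR('a)" by simp
  also have "\<dots> = of_nat n" using assms by (subst freshmans_dream_sum) auto
  finally show ?thesis .
qed

lemma of_int_power_CHAR:
  assumes "prime CHAR('a::comm_ring_1)"
  shows "(of_int a :: 'a) ^ CHAR('a) = of_int a"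
proof (cases "a \<ge> 0")
  case True
  then show ?thesis using of_nat_power_CHAR[OF assms, of "nat a"] by simp
next
  case False
  then have "(of_int a :: 'a) = - of_nat (nat (- a))" by simp
  then show ?thesis using assms of_nat_power_CHAR[OF assms] by (simp add: minus_power_prime_CHAR)
qed

lemma of_int_coordinates_unique:
  fixes i :: "'a::field"
  assumes "prime CHAR('a)" "i ^ CHAR('a) \<noteq> i"
    and "of_int a + of_int b * i = of_int a' + of_int b' * i"
  shows "(of_int a :: 'a) = of_int a' \<and> (of_int b :: 'a) = of_int b'"
proof (cases "(of_int b :: 'a) = of_int b'")
  case False
  \<comment> \<open>otherwise i would lie in the prime field, which Frobenius fixes\<close>
  then have "i = of_int (a' - a) / of_int (b - b')"
    using assms(3) by (simp add: field_simps)
  then have "i ^ CHAR('a) = i"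
    by (simp only: power_divide of_int_power_CHAR[OF assms(1)])
  with assms(2) show ?thesis by contradiction
qed (use assms(3) in simp)

lemma of_int_eq_of_int_balanced:
  assumes "CHAR('a::ring_1) = 2 * m + 1"
  obtains c where "\<bar>c\<bar> \<le> int m" "(of_int a :: 'a) = of_int c"
proof
  define c where "c = (a + int m) mod int (2 * m + 1) - int m"
  have "0 \<le> (a + int m) mod int (2 * m + 1)" "(a + int m) mod int (2 * m + 1) < int (2 * m + 1)"
    by simp_all
  then show "\<bar>c\<bar> \<le> int m" unfolding c_def by linarith
  have "[c = a] (mod int CHAR('a))"
    unfolding c_def assms by (simp add: cong_def mod_diff_left_eq)
  then show "(of_int a :: 'a) = of_int c" by (simp add: of_int_eq_iff_cong_CHAR cong_sym_eq)
qed

lemma power_card_minus_one_eq_one: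
  fixes x :: "'a::{field,finite}"
  assumes "x \<noteq> 0"
  shows "x ^ (card (UNIV :: 'a set) - 1) = 1"
proof -
  define U where "U = UNIV - {0 :: 'a}"
  have card_U: "card U = card (UNIV :: 'a set) - 1"
    by (simp add: U_def card_Diff_singleton)
  have "prod ((*) x) U = prod id U"
    using assms
    by (intro prod.reindex_bij_witness[of _ "\<lambda>y. y / x" "\<lambda>y. x * y"]) (auto simp: U_def)
  then have "x ^ card U * prod id U = 1 * prod id U"
    by (simp add: prod.distrib)
  moreover have "prod id U \<noteq> 0"
    by (simp add: U_def)
  ultimately show ?thesis
    using card_U by simp
qed

lemma card_roots_power_eq_le:
  assumes "n > 0"
  shows "card {x :: 'a::field. x ^ n = c} \<le> n"
proof -
  define P where "P = monom (1 :: 'a) n - [:c:]"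
  have "coeff P n = 1"
    using assms by (simp add: P_def coeff_pCons split: nat.split)
  then have "P \<noteq> 0" by auto
  have "degree P \<le> n"
    unfolding P_def by (rule order.trans[OF degree_diff_le_max]) (simp add: degree_monom_eq)
  moreover have "{x. x ^ n = c} = {x. poly P x = 0}"
    by (simp add: P_def poly_monom)
  ultimately show ?thesis
    using card_poly_roots_bound[OF \<open>P \<noteq> 0\<close>] by simp
qed

lemma CHAR_eq_if_card_eq_prime_power:
  assumes "prime p" "card (UNIV :: 'a::{field,finite} set) = p ^ n"
  shows "CHAR('a) = p"
proof -
  have "prime CHAR('a)"
    by (simp add: finite_imp_CHAR_pos prime_CHAR_semidom)
  moreover have "CHAR('a) dvd p ^ n"
    using CHAR_dvd_CARD[where 'a = 'a] assms(2) by simp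
  ultimately show ?thesis
    using assms(1) prime_dvd_power primes_dvd_imp_eq by blast
qed

lemma exists_not_power_CHAR_fixed:
  assumes "CHAR('a::{field,finite}) < card (UNIV :: 'a set)"
  shows "\<exists>z :: 'a. z ^ CHAR('a) \<noteq> z"
proof (rule ccontr)
  define p where "p = CHAR('a)"
  have "p \<ge> 2"
    unfolding p_def by (simp add: finite_imp_CHAR_pos prime_CHAR_semidom prime_ge_2_nat)
  assume all_fixed: "\<not> ?thesis"
  have "z ^ (p - 1) = 1" if "z \<noteq> 0" for z :: 'a
  proof -
    have "z * z ^ (p - 1) = z * 1"
      using all_fixed \<open>p \<ge> 2\<close> power_Suc[of z "p - 1"] by (simp add: p_def)
    with that show ?thesis by simp
  qed
  then have "UNIV \<subseteq> insert 0 {z :: 'a. z ^ (p - 1) = 1}"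
    by blast
  then have "card (UNIV :: 'a set) \<le> card (insert 0 {z :: 'a. z ^ (p - 1) = 1})"
    by (intro card_mono) simp_all
  also have "\<dots> \<le> Suc (card {z :: 'a. z ^ (p - 1) = 1})"
    by (simp add: card_insert_if)
  also have "card {z :: 'a. z ^ (p - 1) = 1} \<le> p - 1"
    using \<open>p \<ge> 2\<close> by (intro card_roots_power_eq_le) simp
  finally show False using assms \<open>p \<ge> 2\<close> by (simp add: p_def)
qed

lemma of_int_coordinates_exist:
  fixes i :: "'a::{field,finite}"
  assumes "prime CHAR('a)" "i ^ CHAR('a) \<noteq> i" "card (UNIV :: 'a set) = CHAR('a) ^ 2"
  obtains a b where "z = of_int a + of_int b * i"
proof -
  define p where "p = CHAR('a)"
  define coords where "coords = (\<lambda>(j, l). of_nat j + of_nat l * i :: 'a)"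
  have "inj_on coords ({..<p} \<times> {..<p})"
  proof (rule inj_onI, clarsimp)
    fix j l j' l'
    assume "j < p" "l < p" "j' < p" "l' < p" and "coords (j, l) = coords (j', l')"
    then have "(of_nat j :: 'a) = of_nat j' \<and> (of_nat l :: 'a) = of_nat l'"
      using of_int_coordinates_unique[OF assms(1,2), of "int j" "int l" "int j'" "int l'"]
      by (simp add: coords_def)
    with \<open>j < p\<close> \<open>l < p\<close> \<open>j' < p\<close> \<open>l' < p\<close> show "j = j' \<and> l = l'"
      by (auto simp: of_nat_eq_iff_cong_CHAR p_def intro: cong_less_modulus_unique_nat)
  qed
  then have "card (coords ` ({..<p} \<times> {..<p})) = card (UNIV :: 'a set)"
    by (simp add: card_image assms(3) p_def power2_eq_square)
  then have "coords ` ({..<p} \<times> {..<p}) = UNIV"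
    by (simp add: card_subset_eq)
  then obtain j l where "z = coords (j, l)" by (metis UNIV_I imageE prod.exhaust)
  then show thesis using that[of "int j" "int l"] by (simp add: coords_def)
qed

lemma sum_of_gaussian_units_bounded:
  fixes i :: "'a::comm_ring_1"
  assumes "\<And>n. n < s \<Longrightarrow> g n \<in> {0, 1, -1, i, -i}"
  shows "\<exists>a b. \<bar>a\<bar> + \<bar>b\<bar> \<le> int s \<and> (\<Sum>n<s. g n) = of_int a + of_int b * i"
  using assms
proof (induction s)
  case (Suc s)
  then obtain a b where ab: "\<bar>a\<bar> + \<bar>b\<bar> \<le> int s" "(\<Sum>n<s. g n) = of_int a + of_int b * i"
    by auto
  have "g s \<in> {0, 1, -1, i, -i}" using Suc.prems by simp
  then consider "g s = 0" | "g s = 1" | "g s = -1" | "g s = i" | "g s = -i" by blast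
  then show ?case
  proof cases
    case 1 with ab show ?thesis by (intro exI[of _ a] exI[of _ b]) auto
  next
    case 2 with ab show ?thesis by (intro exI[of _ "a + 1"] exI[of _ b]) auto
  next
    case 3 with ab show ?thesis by (intro exI[of _ "a - 1"] exI[of _ b]) auto
  next
    case 4 with ab show ?thesis by (intro exI[of _ a] exI[of _ "b + 1"]) (auto simp: algebra_simps)
  next
    case 5 with ab show ?thesis by (intro exI[of _ a] exI[of _ "b - 1"]) (auto simp: algebra_simps)
  qed
qed (intro exI[of _ 0]; simp)

lemma bounded_gaussian_as_sum_of_units:
  fixes i :: "'a::comm_ring_1"
  assumes "{0, 1, -1, i, -i} \<subseteq> S" "\<bar>a\<bar> + \<bar>b\<bar> \<le> int s"
  shows "\<exists>g. range g \<subseteq> S \<and> (\<Sum>n<s. g n) = of_int a + of_int b * i"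
  using assms(2)
proof (induction s arbitrary: a b)
  case 0
  then have "a = 0" "b = 0" by auto
  with assms(1) show ?case by (intro exI[of _ "\<lambda>_. 0"]) auto
next
  case (Suc s)
  \<comment> \<open>peel off one unit that moves (a, b) towards the origin\<close>
  have step: "\<exists>g. range g \<subseteq> S \<and> (\<Sum>n<Suc s. g n) = of_int a + of_int b * i"
    if ab': "\<bar>a'\<bar> + \<bar>b'\<bar> \<le> int s" and u: "u \<in> S"
      and eq: "of_int a + of_int b * i = of_int a' + of_int b' * i + u"
    for a' b' u
  proof -
    obtain g where g: "range g \<subseteq> S" "(\<Sum>n<s. g n) = of_int a' + of_int b' * i"
      using Suc.IH[OF ab'] by blast
    have "(\<Sum>n<s. (g(s := u)) n) = (\<Sum>n<s. g n)" by (intro sum.cong) auto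
    with g u eq show ?thesis by (intro exI[of _ "g(s := u)"]) auto
  qed
  consider "a > 0" | "a < 0" | "a = 0" "b > 0" | "a = 0" "b < 0" | "a = 0" "b = 0" by linarith
  then show ?case
  proof cases
    case 1 with Suc.prems assms(1) show ?thesis by (intro step[of "a - 1" b 1]) auto
  next
    case 2 with Suc.prems assms(1) show ?thesis by (intro step[of "a + 1" b "-1"]) auto
  next
    case 3 with Suc.prems assms(1) show ?thesis by (intro step[of a "b - 1" i]) (auto simp: algebra_simps)
  next
    case 4 with Suc.prems assms(1) show ?thesis by (intro step[of a "b + 1" "-i"]) (auto simp: algebra_simps)
  next
    case 5 with assms(1) show ?thesis by (intro step[of 0 0 0]) auto
  qed
qed

lemma abs_ge_if_cong_odd_half:
  fixes a :: int
  assumes "[a = int m] (mod int (2 * m + 1))"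
  shows "int m \<le> \<bar>a\<bar>"
proof -
  obtain c where c: "a = int m + int (2 * m + 1) * c"
    using assms by (metis cong_iff_lin cong_sym_eq)
  consider "c = 0" | "c \<ge> 1" | "c \<le> -1" by linarith
  then show ?thesis
  proof cases
    case 2
    then have "int (2 * m + 1) * c \<ge> int (2 * m + 1)" by simp
    with c show ?thesis by linarith
  next
    case 3
    then have "int (2 * m + 1) * c \<le> - int (2 * m + 1)"
      using mult_left_mono[OF 3, of "int (2 * m + 1)"] by simp
    with c show ?thesis by linarith
  qed (use c in simp)
qed

lemma fourth_roots_of_unity:
  fixes i z :: "'a::idom"
  assumes "i * i = -1" "z ^ 4 = 1"
  shows "z \<in> {1, -1, i, -i}"
proof -
  have "(z - 1) * (z + 1) * ((z - i) * (z + i)) = z ^ 4 - 1"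
    using assms(1) by (simp add: algebra_simps eval_nat_numeral)
  then have "(z - 1) * (z + 1) * ((z - i) * (z + i)) = 0"
    using assms(2) by simp
  then show ?thesis
    by (auto simp: add_eq_0_iff2)
qed

lemma power_quarter_card_power_four:
  fixes x :: "'a::{field,finite}"
  assumes "card (UNIV :: 'a set) = 4 * k + 1" "x \<noteq> 0"
  shows "(x ^ k) ^ 4 = 1"
  using power_card_minus_one_eq_one[OF assms(2)] assms(1) by (simp flip: power_mult add: mult.commute)

lemma exists_power_quarter_card_sqrt_minus_one:
  assumes "card (UNIV :: 'a set) = 4 * k + 1" "k > 0"
  obtains x :: "'a::{field,finite}" where "x ^ k * x ^ k = -1"
proof -
  \<comment> \<open>\<open>x ^ (2 * k) = 1\<close> has at most \<open>2 * k\<close> of the \<open>4 * k\<close> units as solutions\<close>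
  have "\<not> UNIV - {0} \<subseteq> {x :: 'a. x ^ (2 * k) = 1}"
  proof
    assume "UNIV - {0} \<subseteq> {x :: 'a. x ^ (2 * k) = 1}"
    then have "card (UNIV - {0 :: 'a}) \<le> card {x :: 'a. x ^ (2 * k) = 1}"
      by (intro card_mono) simp_all
    also have "\<dots> \<le> 2 * k"
      using assms(2) by (intro card_roots_power_eq_le) simp
    finally show False
      using assms by (simp add: card_Diff_singleton)
  qed
  then obtain x :: 'a where "x \<noteq> 0" "x ^ (2 * k) \<noteq> 1"
    by blast
  moreover have "(x ^ (2 * k) - 1) * (x ^ (2 * k) + 1) = (x ^ k) ^ 4 - 1"
    by (simp add: algebra_simps power_mult_distrib flip: power_mult power_add)
  ultimately have "x ^ (2 * k) + 1 = 0"
    using power_quarter_card_power_four[OF assms(1)] by simp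
  then show thesis
    by (intro that[of x]) (simp add: add_eq_0_iff2 mult_2 power_add)
qed

lemma range_power_quarter_card:
  fixes x :: "'a::{field,finite}"
  assumes "card (UNIV :: 'a set) = 4 * k + 1" "k > 0" "x ^ k * x ^ k = -1"
  shows "range (\<lambda>y. y ^ k) = {0, 1, -1, x ^ k, - (x ^ k)}"
proof
  show "range (\<lambda>y. y ^ k) \<subseteq> {0, 1, -1, x ^ k, - (x ^ k)}"
    using fourth_roots_of_unity[OF assms(3)] power_quarter_card_power_four[OF assms(1)] assms(2)
    by (cases "y = 0") fastforce+
next
  have "(x ^ 2) ^ k = -1" "(x ^ 3) ^ k = - (x ^ k)"
    using assms(3) by (simp_all add: power_mult_distrib power3_eq_cube power2_eq_square)
  then show "{0, 1, -1, x ^ k, - (x ^ k)} \<subseteq> range (\<lambda>y. y ^ k)"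
    using assms(2)
    by (auto intro: range_eqI[of _ _ 0] range_eqI[of _ _ 1] range_eqI[of _ _ x]
        range_eqI[of _ _ "x ^ 2"] range_eqI[of _ _ "x ^ 3"])
qed

lemma power_quarter_card_power_mod_4_eq_1:
  fixes y :: "'a::{field,finite}"
  assumes "card (UNIV :: 'a set) = 4 * k + 1" "k > 0" "n mod 4 = 1"
  shows "(y ^ k) ^ n = y ^ k"
proof (cases "y = 0")
  case False
  have "n = 4 * (n div 4) + 1"
    using assms(3) div_mult_mod_eq[of n 4] by linarith
  then obtain q where q: "n = 4 * q + 1"
    by blast
  have "(y ^ k) ^ n = ((y ^ k) ^ 4) ^ q * y ^ k"
    unfolding q by (simp only: power_add power_mult power_one_right)
  then show ?thesis
    using power_quarter_card_power_four[OF assms(1) False] by simp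
qed (use assms in \<open>simp add: zero_power\<close>)

lemma power_sqrt_minus_one_mod_4_eq_3:
  fixes i :: "'a::comm_ring_1"
  assumes "i * i = -1" "n mod 4 = 3"
  shows "i ^ n = - i"
proof -
  define r where "r = n div 2"
  have n: "n = 2 * r + 1" and "odd r"
    using assms(2) div_mult_mod_eq[of n 2] unfolding r_def by presburger+
  have "i ^ n = (i * i) ^ r * i"
    unfolding n by (simp only: power_add power_mult power2_eq_square power_one_right)
  also have "\<dots> = (- 1) ^ r * i"
    by (simp only: assms(1))
  also have "\<dots> = - i"
    using \<open>odd r\<close> by simp
  finally show ?thesis .
qed

lemma sqrt_minus_one_power_CHAR_neq:
  fixes i :: "'a::idom"
  assumes "i * i = -1" "CHAR('a) mod 4 = 3"
  shows "i ^ CHAR('a) \<noteq> i"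
proof
  assume fixed: "i ^ CHAR('a) = i"
  have "i + i = i ^ CHAR('a) + i"
    by (simp only: fixed)
  also have "\<dots> = 0"
    by (simp add: power_sqrt_minus_one_mod_4_eq_3[OF assms])
  finally have "of_nat 2 * i = 0"
    by (simp only: of_nat_numeral mult_2)
  moreover have "i \<noteq> 0"
  proof
    assume "i = 0"
    with assms(1) show False by simp
  qed
  ultimately have "CHAR('a) dvd 2"
    using of_nat_eq_0_iff_char_dvd[of 2, where 'a = 'a] by simp
  then have "CHAR('a) \<le> 2"
    by (rule dvd_imp_le) simp
  with assms(2) show False
    by presburger
qed

lemma not_waring_prop_below_gaussian:
  fixes i :: "'a::{field,finite}"
  assumes "CHAR('a) = 2 * m + 1" "prime CHAR('a)" "i ^ CHAR('a) \<noteq> i"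
    and "range (\<lambda>y. y ^ k) \<subseteq> {0, 1, -1, i, -i}" "s < 2 * m"
  shows "\<not> waring_prop TYPE('a) k s"
proof
  assume "waring_prop TYPE('a) k s"
  then obtain f where f: "of_int (int m) + of_int (int m) * i = (\<Sum>n<s. f n ^ k)"
    unfolding waring_prop_def by blast
  obtain a b where ab: "\<bar>a\<bar> + \<bar>b\<bar> \<le> int s" "(\<Sum>n<s. f n ^ k) = of_int a + of_int b * i"
    using sum_of_gaussian_units_bounded[of s "\<lambda>n. f n ^ k" i] assms(4) by blast
  have "(of_int a :: 'a) = of_int (int m) \<and> (of_int b :: 'a) = of_int (int m)"
    using of_int_coordinates_unique[OF assms(2,3)] f ab(2) by metis
  then have "[a = int m] (mod int (2 * m + 1))" "[b = int m] (mod int (2 * m + 1))"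
    by (simp_all only: of_int_eq_iff_cong_CHAR assms(1))
  then have "int m \<le> \<bar>a\<bar>" "int m \<le> \<bar>b\<bar>"
    by (simp_all add: abs_ge_if_cong_odd_half)
  with ab(1) assms(5) show False by linarith
qed

lemma waring_prop_gaussian:
  fixes i :: "'a::{field,finite}"
  assumes "CHAR('a) = 2 * m + 1" "prime CHAR('a)" "i ^ CHAR('a) \<noteq> i"
    and "card (UNIV :: 'a set) = CHAR('a) ^ 2" "{0, 1, -1, i, -i} \<subseteq> range (\<lambda>y. y ^ k)"
  shows "waring_prop TYPE('a) k (2 * m)"
  unfolding waring_prop_def
proof
  fix z :: 'a
  obtain a b where z: "z = of_int a + of_int b * i"
    using of_int_coordinates_exist[OF assms(2,3,4)] .
  obtain c where c: "\<bar>c\<bar> \<le> int m" "(of_int a :: 'a) = of_int c"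
    using of_int_eq_of_int_balanced[OF assms(1)] .
  obtain d where d: "\<bar>d\<bar> \<le> int m" "(of_int b :: 'a) = of_int d"
    using of_int_eq_of_int_balanced[OF assms(1)] .
  have "\<bar>c\<bar> + \<bar>d\<bar> \<le> int (2 * m)"
    using c(1) d(1) by simp
  then have "\<exists>g. range g \<subseteq> range (\<lambda>y. y ^ k) \<and> (\<Sum>n<2 * m. g n) = of_int c + of_int d * i"
    by (rule bounded_gaussian_as_sum_of_units[OF assms(5)])
  moreover have "of_int c + of_int d * i = z"
    using z c(2) d(2) by simp
  ultimately obtain g where g: "range g \<subseteq> range (\<lambda>y. y ^ k)" "(\<Sum>n<2 * m. g n) = z"
    by metis
  then have "\<forall>n. \<exists>y. g n = y ^ k"
    by blast
  then obtain f where "\<forall>n. g n = f n ^ k"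
    by (rule choice[THEN exE])
  then have "g = (\<lambda>n. f n ^ k)"
    by (intro ext) simp
  with g(2) show "\<exists>f. z = (\<Sum>n<2 * m. f n ^ k)"
    by metis
qed

lemma waring_number_gaussian:
  fixes i :: "'a::{field,finite}"
  assumes "CHAR('a) = 2 * m + 1" "prime CHAR('a)" "i ^ CHAR('a) \<noteq> i"
    and "card (UNIV :: 'a set) = CHAR('a) ^ 2" "range (\<lambda>y. y ^ k) = {0, 1, -1, i, -i}"
  shows "waring_number TYPE('a) k = Some (2 * m)"
proof -
  have upper: "waring_prop TYPE('a) k (2 * m)"
    using waring_prop_gaussian[OF assms(1-4)] assms(5) by simp
  have "(LEAST s. waring_prop TYPE('a) k s) = 2 * m"
  proof (rule Least_equality)
    show "2 * m \<le> s" if "waring_prop TYPE('a) k s" for s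
    proof (rule ccontr)
      assume "\<not> 2 * m \<le> s"
      with that show False
        using not_waring_prop_below_gaussian[OF assms(1-3), of k s] assms(5) by simp
    qed
  qed (fact upper)
  with upper show ?thesis
    by (auto simp: waring_number_def)
qed

lemma waring_number_eq_None_if_powers_CHAR_fixed:
  assumes "\<And>y :: 'a::{field,finite}. (y ^ k) ^ CHAR('a) = y ^ k"
    and "CHAR('a) < card (UNIV :: 'a set)"
  shows "waring_number TYPE('a) k = None"
proof -
  \<comment> \<open>sums of k-th powers stay in the prime field, which is not everything\<close>
  have fixed: "(\<Sum>n<s. f n ^ k) ^ CHAR('a) = (\<Sum>n<s. f n ^ k)" for s and f :: "nat \<Rightarrow> 'a"
    using assms(1) by (simp add: freshmans_dream_sum finite_imp_CHAR_pos prime_CHAR_semidom)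
  obtain z :: 'a where z: "z ^ CHAR('a) \<noteq> z"
    using exists_not_power_CHAR_fixed[OF assms(2)] by blast
  have "\<not> waring_prop TYPE('a) k s" for s
  proof
    assume "waring_prop TYPE('a) k s"
    then obtain f where "z = (\<Sum>n<s. f n ^ k)"
      unfolding waring_prop_def by blast
    with fixed z show False by simp
  qed
  then show ?thesis
    by (simp add: waring_number_def)
qed

theorem mainTheorem10:
  fixes p :: nat
  assumes "prime p" and "odd p"
    and "card (UNIV :: 'a set) = p ^ 2"
  shows "(p mod 4 = 3 \<longrightarrow> waring_number TYPE('a::{field,finite}) ((p ^ 2 - 1) div 4) = Some (p - 1))
       \<and> (p mod 4 = 1 \<longrightarrow> waring_number TYPE('a) ((p ^ 2 - 1) div 4) = None)"
proof -
  have char: "CHAR('a) = p"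
    using CHAR_eq_if_card_eq_prime_power[OF assms(1,3)] .
  obtain m where m: "p = 2 * m + 1"
    using assms(2) oddE by blast
  define k where "k = (p ^ 2 - 1) div 4"
  have card: "card (UNIV :: 'a set) = 4 * k + 1" and "k > 0"
    using assms(3) prime_ge_2_nat[OF assms(1)] unfolding k_def m
    by (auto simp: power2_eq_square algebra_simps)
  obtain x :: 'a where x: "x ^ k * x ^ k = -1"
    using exists_power_quarter_card_sqrt_minus_one[OF card \<open>k > 0\<close>] .
  show ?thesis
    unfolding k_def[symmetric]
  proof (intro conjI impI)
    assume "p mod 4 = 3"
    then have "(x ^ k) ^ p \<noteq> x ^ k"
      using sqrt_minus_one_power_CHAR_neq[OF x] char by simp
    then show "waring_number TYPE('a) k = Some (p - 1)"
      using waring_number_gaussian[of m "x ^ k" k] range_power_quarter_card[OF card \<open>k > 0\<close> x]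
        char m assms(1,3) by simp
  next
    assume "p mod 4 = 1"
    then have "(y ^ k) ^ CHAR('a) = y ^ k" for y :: 'a
      using power_quarter_card_power_mod_4_eq_1[OF card \<open>k > 0\<close>] char by simp
    moreover have "CHAR('a) < card (UNIV :: 'a set)"
      using assms(3) prime_ge_2_nat[OF assms(1)] char by (simp add: power2_eq_square)
    ultimately show "waring_number TYPE('a) k = None"
      by (rule waring_number_eq_None_if_powers_CHAR_fixed)
  qed
qed

end
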